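(* Let $C$ be a set of pairwise disjoint lines on the Fermat cubic ${\rm F}_3$ and put $C^s=C\cap\mathcal{L}^s$ for $s=0,1,2$. If $\#C^s=3$ for some $s$, then there exists $k\in\{0,1,2\}\setminus\{s\}$ such that $C^k=\emptyset$.
   Context: ${\rm F}_3\subset\mathbb{P}^3(\mathbb{C})$ is the surface $x^3-y^3-z^3+w^3=0$. Let $\eta$ be a primitive cube root of unity and $v=-1$. For $k,i\in\{0,1,2\}$ define $L^0_{k,i}:\{y=\eta^i x,\ w=\eta^k z\}$, $L^1_{k,i}:\{x=\eta^{k+i}z,\ y=\eta^i w\}$, $L^2_{k,i}:\{x=v\eta^i w,\ y=v\eta^{k+i}z\}$, and $\mathcal{L}^s=\{L^s_{k,i}\}_{k,i}$; the 27 lines on ${\rm F}_3$ are exactly $\mathcal{L}^0\cup\mathcal{L}^1\cup\mathcal{L}^2$. *)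

theory Defs
  imports Complex_Main
begin

text \<open>Points of P^3(C) are represented by their homogeneous coordinate vectors
  (x,y,z,w) in C^4 - {0}; a line of P^3 is represented by its affine cone minus the origin,
  i.e. the set of nonzero coordinate vectors of its points.\<close>

type_synonym pt = "complex \<times> complex \<times> complex \<times> complex"

definition eta :: complex where
  "eta = cis (2 * pi / 3)"

definition fermat_cubic :: "pt set" where
  "fermat_cubic = {(x,y,z,w). (x,y,z,w) \<noteq> (0,0,0,0) \<and> x^3 - y^3 - z^3 + w^3 = 0}"

definition Lline :: "nat \<Rightarrow> nat \<Rightarrow> nat \<Rightarrow> pt set" where
  "Lline s k i = {(x,y,z,w). (x,y,z,w) \<noteq> (0,0,0,0) \<and>
     (if s = 0 then y = eta^i * x \<and> w = eta^k * z
      else if s = 1 then x = eta^(k+i) * z \<and> y = eta^i * w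
      else x = - (eta^i * w) \<and> y = - (eta^(k+i) * z))}"

definition Lfam :: "nat \<Rightarrow> pt set set" where
  "Lfam s = {Lline s k i | k i. k < 3 \<and> i < 3}"

definition lines_F3 :: "pt set set" where
  "lines_F3 = Lfam 0 \<union> Lfam 1 \<union> Lfam 2"

end

theory Submission
  imports Defs
begin

(* Parametrise the lines of the family L^s by (a, i) in (Z/3)^2, where a = k for s = 0 and
   a = k + i otherwise. Two lines of L^s meet as soon as they share a coordinate, so three pairwise
   disjoint ones have distinct a's and distinct i's: a_j |-> i_j is a permutation of Z/3. Every line
   of one of the other two families meets all lines of L^s with a prescribed value of a + i, and
   every line of the last family all those with a prescribed value of a - i. As each permutation of
   Z/3 is x |-> +-x + c, either a + i or a - i takes all three values on the three lines, and then
   every line of the corresponding family meets one of them. *)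

lemma eta_cube: "eta ^ 3 = 1"
  unfolding eta_def by (simp add: DeMoivre)

lemma eta_nonzero: "eta \<noteq> 0"
  using eta_cube by auto

lemma eta_power_cong:
  assumes "m mod 3 = n mod 3"
  shows "eta ^ m = eta ^ n"
proof -
  have "eta ^ m = eta ^ (m mod 3)" for m
  proof -
    have "eta ^ m = (eta ^ 3) ^ (m div 3) * eta ^ (m mod 3)"
      by (simp only: power_mult[symmetric] power_add[symmetric] mult_div_mod_eq)
    then show ?thesis
      by (simp add: eta_cube)
  qed
  then show ?thesis
    using assms by metis
qed

lemma Lline_meets_line_z_w_iff: "(\<exists>x y. (x, y, 0, 0) \<in> Lline s k i) \<longleftrightarrow> s = 0"
  by (cases "s = 0"; cases "s = 1") (auto simp: Lline_def intro: exI[of _ 1])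

lemma Lline_meets_line_y_w_iff: "(\<exists>x z. (x, 0, z, 0) \<in> Lline s k i) \<longleftrightarrow> s = 1"
  by (cases "s = 0"; cases "s = 1") (auto simp: Lline_def eta_nonzero intro: exI[of _ 1])

lemma Lline_neq_of_family_neq:
  assumes "s < 3" "t < 3" "s \<noteq> t"
  shows "Lline s k i \<noteq> Lline t k' i'"
proof
  assume "Lline s k i = Lline t k' i'"
  then have "s = 0 \<longleftrightarrow> t = 0" "s = 1 \<longleftrightarrow> t = 1"
    by (metis Lline_meets_line_z_w_iff, metis Lline_meets_line_y_w_iff)
  then show False
    using assms by linarith
qed

lemma mem_Lline_0:
  "(x, y, z, w) \<in> Lline 0 k i \<longleftrightarrow>
     (x, y, z, w) \<noteq> (0, 0, 0, 0) \<and> y = eta ^ i * x \<and> w = eta ^ k * z"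
  by (simp add: Lline_def)

lemma mem_Lline_1:
  "(x, y, z, w) \<in> Lline 1 k i \<longleftrightarrow>
     (x, y, z, w) \<noteq> (0, 0, 0, 0) \<and> x = eta ^ (k + i) * z \<and> y = eta ^ i * w"
  by (simp add: Lline_def)

lemma mem_Lline_2:
  "(x, y, z, w) \<in> Lline 2 k i \<longleftrightarrow>
     (x, y, z, w) \<noteq> (0, 0, 0, 0) \<and> x = - (eta ^ i * w) \<and> y = - (eta ^ (k + i) * z)"
  by (simp add: Lline_def)

lemma Lline_0_0_meet:
  assumes "k mod 3 = k' mod 3 \<or> i mod 3 = i' mod 3"
  shows "Lline 0 k i \<inter> Lline 0 k' i' \<noteq> {}"
  using assms
proof
  assume "k mod 3 = k' mod 3"
  then have "eta ^ k = eta ^ k'" by (rule eta_power_cong)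
  then have "(0, 0, 1, eta ^ k) \<in> Lline 0 k i \<inter> Lline 0 k' i'"
    unfolding Int_iff mem_Lline_0 by simp
  then show ?thesis by blast
next
  assume "i mod 3 = i' mod 3"
  then have "eta ^ i = eta ^ i'" by (rule eta_power_cong)
  then have "(1, eta ^ i, 0, 0) \<in> Lline 0 k i \<inter> Lline 0 k' i'"
    unfolding Int_iff mem_Lline_0 by simp
  then show ?thesis by blast
qed

lemma Lline_1_1_meet:
  assumes "(k + i) mod 3 = (k' + i') mod 3 \<or> i mod 3 = i' mod 3"
  shows "Lline 1 k i \<inter> Lline 1 k' i' \<noteq> {}"
  using assms
proof
  assume "(k + i) mod 3 = (k' + i') mod 3"
  then have "eta ^ (k + i) = eta ^ (k' + i')" by (rule eta_power_cong)
  then have "(eta ^ (k + i), 0, 1, 0) \<in> Lline 1 k i \<inter> Lline 1 k' i'"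
    unfolding Int_iff mem_Lline_1 by simp
  then show ?thesis by blast
next
  assume "i mod 3 = i' mod 3"
  then have "eta ^ i = eta ^ i'" by (rule eta_power_cong)
  then have "(0, eta ^ i, 0, 1) \<in> Lline 1 k i \<inter> Lline 1 k' i'"
    unfolding Int_iff mem_Lline_1 by simp
  then show ?thesis by blast
qed

lemma Lline_2_2_meet:
  assumes "(k + i) mod 3 = (k' + i') mod 3 \<or> i mod 3 = i' mod 3"
  shows "Lline 2 k i \<inter> Lline 2 k' i' \<noteq> {}"
  using assms
proof
  assume "(k + i) mod 3 = (k' + i') mod 3"
  then have "eta ^ (k + i) = eta ^ (k' + i')" by (rule eta_power_cong)
  then have "(0, - (eta ^ (k + i)), 1, 0) \<in> Lline 2 k i \<inter> Lline 2 k' i'"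
    unfolding Int_iff mem_Lline_2 by simp
  then show ?thesis by blast
next
  assume "i mod 3 = i' mod 3"
  then have "eta ^ i = eta ^ i'" by (rule eta_power_cong)
  then have "(- (eta ^ i), 0, 0, 1) \<in> Lline 2 k i \<inter> Lline 2 k' i'"
    unfolding Int_iff mem_Lline_2 by simp
  then show ?thesis by blast
qed

lemma Lline_0_1_meet:
  assumes "(k + 2 * i) mod 3 = k' mod 3"
  shows "Lline 0 k i \<inter> Lline 1 k' i' \<noteq> {}"
proof -
  have "(i + (k' + i')) mod 3 = (i + ((k + 2 * i) + i')) mod 3"
    using assms by (metis mod_add_cong)
  also have "\<dots> = (i' + k + 3 * i) mod 3"
    by (simp add: ac_simps)
  finally have "eta ^ i * eta ^ (k' + i') = eta ^ i' * eta ^ k"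
    unfolding power_add[symmetric] by (intro eta_power_cong) simp
  then have "(eta ^ (k' + i'), eta ^ i' * eta ^ k, 1, eta ^ k) \<in>
      Lline 0 k i \<inter> Lline 1 k' i'"
    unfolding Int_iff mem_Lline_0 mem_Lline_1 by simp
  then show ?thesis by blast
qed

lemma Lline_0_2_meet:
  assumes "(k + i) mod 3 = k' mod 3"
  shows "Lline 0 k i \<inter> Lline 2 k' i' \<noteq> {}"
proof -
  have "(k' + i') mod 3 = ((k + i) + i') mod 3"
    using assms by (metis mod_add_cong)
  then have "eta ^ (k' + i') = eta ^ i * eta ^ (i' + k)"
    unfolding power_add[symmetric] by (intro eta_power_cong) (simp add: ac_simps)
  then have "(- (eta ^ (i' + k)), - (eta ^ (k' + i')), 1, eta ^ k) \<in>
      Lline 0 k i \<inter> Lline 2 k' i'"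
    unfolding Int_iff mem_Lline_0 mem_Lline_2 by (simp add: power_add[of _ i' k])
  then show ?thesis by blast
qed

lemma Lline_1_2_meet:
  assumes "(k + 2 * i) mod 3 = (k' + 2 * i') mod 3"
  shows "Lline 1 k i \<inter> Lline 2 k' i' \<noteq> {}"
proof -
  define w where "w = - (eta ^ (k + i + 2 * i'))"
  have "(i + (k + i + 2 * i')) mod 3 = ((k + 2 * i) + 2 * i') mod 3"
    by (simp add: ac_simps)
  also have "\<dots> = ((k' + 2 * i') + 2 * i') mod 3"
    using assms by (metis mod_add_cong)
  also have "\<dots> = (k' + i' + 3 * i') mod 3"
    by (intro arg_cong[of _ _ "\<lambda>x. x mod 3"]) simp
  also have "\<dots> = (k' + i') mod 3"
    by (rule mod_mult_self2)
  finally have "eta ^ i * eta ^ (k + i + 2 * i') = eta ^ (k' + i')"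
    unfolding power_add[symmetric] by (rule eta_power_cong)
  moreover have "eta ^ i' * eta ^ (k + i + 2 * i') = eta ^ (k + i)"
    unfolding power_add[symmetric] by (intro eta_power_cong) simp
  ultimately have "(eta ^ (k + i), eta ^ i * w, 1, w) \<in> Lline 1 k i \<inter> Lline 2 k' i'"
    unfolding Int_iff mem_Lline_1 mem_Lline_2 w_def by simp
  then show ?thesis by blast
qed

(* a + 2 * i stands for a - i in Z/3, avoiding truncated subtraction on nat. *)
definition incidence_coordinates ::
    "nat \<Rightarrow> nat \<Rightarrow> nat \<Rightarrow> (nat \<Rightarrow> nat \<Rightarrow> nat) \<Rightarrow> bool" where
  "incidence_coordinates s t u a \<longleftrightarrow>
     (\<forall>k i k' i'. a k i mod 3 = a k' i' mod 3 \<or> i mod 3 = i' mod 3 \<longrightarrow>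
        Lline s k i \<inter> Lline s k' i' \<noteq> {}) \<and>
     (\<forall>k' i'. \<exists>r. \<forall>k i. (a k i + i) mod 3 = r mod 3 \<longrightarrow>
        Lline s k i \<inter> Lline t k' i' \<noteq> {}) \<and>
     (\<forall>k' i'. \<exists>r. \<forall>k i. (a k i + 2 * i) mod 3 = r mod 3 \<longrightarrow>
        Lline s k i \<inter> Lline u k' i' \<noteq> {})"

lemma incidence_coordinates_0: "incidence_coordinates 0 2 1 (\<lambda>k i. k)"
  unfolding incidence_coordinates_def using Lline_0_0_meet Lline_0_1_meet Lline_0_2_meet by blast

lemma incidence_coordinates_1: "incidence_coordinates 1 2 0 (\<lambda>k i. k + i)"
proof -
  have "k + i + i = k + 2 * i" "(k + i + 2 * i) mod 3 = k mod 3" for k i :: nat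
    by simp_all
  then show ?thesis
    unfolding incidence_coordinates_def using Lline_1_1_meet Lline_1_2_meet Lline_0_1_meet
    by (metis Int_commute)
qed

lemma incidence_coordinates_2: "incidence_coordinates 2 1 0 (\<lambda>k i. k + i)"
proof -
  have "k + i + i = k + 2 * i" "(k + i + 2 * i) mod 3 = k mod 3" for k i :: nat
    by simp_all
  then show ?thesis
    unfolding incidence_coordinates_def using Lline_2_2_meet Lline_1_2_meet Lline_0_2_meet
    by (metis Int_commute)
qed

lemma distinct_mod_3_cases:
  fixes x1 x2 x3 :: nat
  assumes "distinct [x1 mod 3, x2 mod 3, x3 mod 3]"
  shows "(x1 mod 3, x2 mod 3, x3 mod 3) \<in>
    {(0, 1, 2), (0, 2, 1), (1, 0, 2), (1, 2, 0), (2, 0, 1), (2, 1, 0)}"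
proof -
  have "x1 mod 3 \<in> {0, 1, 2}" "x2 mod 3 \<in> {0, 1, 2}" "x3 mod 3 \<in> {0, 1, 2}"
    by auto
  then show ?thesis
    using assms by (elim insertE emptyE; simp)
qed

lemma distinct_mod_3_cover:
  fixes x1 x2 x3 r :: nat
  assumes "distinct [x1 mod 3, x2 mod 3, x3 mod 3]"
  shows "r mod 3 \<in> {x1 mod 3, x2 mod 3, x3 mod 3}"
proof -
  have "r mod 3 \<in> {0, 1, 2}"
    by auto
  then show ?thesis
    using distinct_mod_3_cases[OF assms] by auto
qed

(* The map a_j |-> b_j is a permutation of Z/3, hence x |-> x + c or x |-> c - x; in the first case
   the sums a_j + b_j are distinct, in the second the differences a_j - b_j. *)
lemma distinct_mod_3_sums_or_differences:
  fixes a1 a2 a3 b1 b2 b3 :: nat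
  assumes "distinct [a1 mod 3, a2 mod 3, a3 mod 3]" "distinct [b1 mod 3, b2 mod 3, b3 mod 3]"
  shows "distinct [(a1 + b1) mod 3, (a2 + b2) mod 3, (a3 + b3) mod 3] \<or>
         distinct [(a1 + 2 * b1) mod 3, (a2 + 2 * b2) mod 3, (a3 + 2 * b3) mod 3]"
proof -
  have "distinct [(a1 mod 3 + b1 mod 3) mod 3, (a2 mod 3 + b2 mod 3) mod 3,
      (a3 mod 3 + b3 mod 3) mod 3] \<or>
    distinct [(a1 mod 3 + 2 * (b1 mod 3)) mod 3, (a2 mod 3 + 2 * (b2 mod 3)) mod 3,
      (a3 mod 3 + 2 * (b3 mod 3)) mod 3]"
    using distinct_mod_3_cases[OF assms(1)] distinct_mod_3_cases[OF assms(2)]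
    by (elim insertE emptyE; simp)
  moreover have "(x mod 3 + 2 * (y mod 3)) mod 3 = (x + 2 * y) mod 3" for x y :: nat
    by (rule mod_add_cong) (simp_all add: mod_mult_right_eq)
  ultimately show ?thesis
    by (simp add: mod_add_eq)
qed

lemma Lfam_empty_if_residues_cover:
  fixes f :: "nat \<Rightarrow> nat \<Rightarrow> nat"
  assumes disj: "pairwise disjnt C" and "s < 3" "t < 3" "t \<noteq> s"
    and meet: "\<forall>k' i'. \<exists>r. \<forall>k i. f k i mod 3 = r mod 3 \<longrightarrow>
      Lline s k i \<inter> Lline t k' i' \<noteq> {}"
    and lines: "Lline s k1 i1 \<in> C" "Lline s k2 i2 \<in> C" "Lline s k3 i3 \<in> C"
    and distinct: "distinct [f k1 i1 mod 3, f k2 i2 mod 3, f k3 i3 mod 3]"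
  shows "C \<inter> Lfam t = {}"
proof (rule ccontr)
  assume "C \<inter> Lfam t \<noteq> {}"
  then obtain k' i' where line': "Lline t k' i' \<in> C"
    unfolding Lfam_def by blast
  obtain r where r: "\<forall>k i. f k i mod 3 = r mod 3 \<longrightarrow> Lline s k i \<inter> Lline t k' i' \<noteq> {}"
    using meet by blast
  obtain k i where line: "Lline s k i \<in> C" and "f k i mod 3 = r mod 3"
    using distinct_mod_3_cover[OF distinct, of r] lines by auto
  with r have "Lline s k i \<inter> Lline t k' i' \<noteq> {}"
    by blast
  with disj line line' have "Lline s k i = Lline t k' i'"
    unfolding pairwise_def disjnt_def by blast
  with Lline_neq_of_family_neq \<open>s < 3\<close> \<open>t < 3\<close> \<open>t \<noteq> s\<close> show False
    by metis
qed

lemma three_disjoint_lines_exclude_family: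
  assumes coords: "incidence_coordinates s t u a"
    and "s < 3" "t < 3" "t \<noteq> s" "u < 3" "u \<noteq> s"
    and disj: "pairwise disjnt C" and three: "card (C \<inter> Lfam s) = 3"
  shows "\<exists>k<3. k \<noteq> s \<and> C \<inter> Lfam k = {}"
proof -
  obtain l1 l2 l3 where lines: "C \<inter> Lfam s = {l1, l2, l3}" "l1 \<noteq> l2" "l1 \<noteq> l3" "l2 \<noteq> l3"
    using three card_3_iff by metis
  have "l1 \<in> Lfam s" "l2 \<in> Lfam s" "l3 \<in> Lfam s"
    using lines(1) by auto
  then obtain k1 i1 k2 i2 k3 i3
    where "l1 = Lline s k1 i1" "l2 = Lline s k2 i2" "l3 = Lline s k3 i3"
    unfolding Lfam_def by blast
  with lines have in_C: "Lline s k1 i1 \<in> C" "Lline s k2 i2 \<in> C" "Lline s k3 i3 \<in> C"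
    and neq: "Lline s k1 i1 \<noteq> Lline s k2 i2" "Lline s k1 i1 \<noteq> Lline s k3 i3"
      "Lline s k2 i2 \<noteq> Lline s k3 i3"
    by auto
  have separated: "a k i mod 3 \<noteq> a k' i' mod 3 \<and> i mod 3 \<noteq> i' mod 3"
    if "Lline s k i \<in> C" "Lline s k' i' \<in> C" "Lline s k i \<noteq> Lline s k' i'" for k i k' i'
    using coords disj that unfolding incidence_coordinates_def pairwise_def disjnt_def by blast
  have "distinct [a k1 i1 mod 3, a k2 i2 mod 3, a k3 i3 mod 3]"
    "distinct [i1 mod 3, i2 mod 3, i3 mod 3]"
    using separated[OF in_C(1,2) neq(1)] separated[OF in_C(1,3) neq(2)]
      separated[OF in_C(2,3) neq(3)] by auto
  from distinct_mod_3_sums_or_differences[OF this]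
  have "C \<inter> Lfam t = {} \<or> C \<inter> Lfam u = {}"
  proof
    assume "distinct [(a k1 i1 + i1) mod 3, (a k2 i2 + i2) mod 3, (a k3 i3 + i3) mod 3]"
    with coords show ?thesis
      using Lfam_empty_if_residues_cover[where f = "\<lambda>k i. a k i + i",
          OF disj \<open>s < 3\<close> \<open>t < 3\<close> \<open>t \<noteq> s\<close> _ in_C]
      unfolding incidence_coordinates_def by blast
  next
    assume "distinct [(a k1 i1 + 2 * i1) mod 3, (a k2 i2 + 2 * i2) mod 3, (a k3 i3 + 2 * i3) mod 3]"
    with coords show ?thesis
      using Lfam_empty_if_residues_cover[where f = "\<lambda>k i. a k i + 2 * i",
          OF disj \<open>s < 3\<close> \<open>u < 3\<close> \<open>u \<noteq> s\<close> _ in_C]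
      unfolding incidence_coordinates_def by blast
  qed
  with \<open>t < 3\<close> \<open>t \<noteq> s\<close> \<open>u < 3\<close> \<open>u \<noteq> s\<close> show ?thesis
    by blast
qed

theorem proposition3p1:
  fixes C :: "pt set set" and s :: nat
  assumes "C \<subseteq> lines_F3"
    and "\<forall>l1\<in>C. \<forall>l2\<in>C. l1 \<noteq> l2 \<longrightarrow> l1 \<inter> l2 = {}"
    and "s < 3"
    and "card (C \<inter> Lfam s) = 3"
  shows "\<exists>k<3. k \<noteq> s \<and> C \<inter> Lfam k = {}"
proof -
  have disj: "pairwise disjnt C"
    using assms(2) unfolding pairwise_def disjnt_def by blast
  consider "s = 0" | "s = 1" | "s = 2"
    using assms(3) by linarith
  then show ?thesis
  proof cases
    case 1
    show ?thesis
      using three_disjoint_lines_exclude_family[OF incidence_coordinates_0 _ _ _ _ _ disj] 1 assms(4)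
      by simp
  next
    case 2
    show ?thesis
      using three_disjoint_lines_exclude_family[OF incidence_coordinates_1 _ _ _ _ _ disj] 2 assms(4)
      by simp
  next
    case 3
    show ?thesis
      using three_disjoint_lines_exclude_family[OF incidence_coordinates_2 _ _ _ _ _ disj] 3 assms(4)
      by simp
  qed
qed

end
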